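(* Let $p$ be a prime and $d\ge1$ with $q=p^d>9$ and $q\equiv7\pmod{12}$. Let $H_0$ be the subgroup of order $(q-1)/6$ of ${\rm GF}(q)^\times$ and $G=\{x\mapsto ax+b: a\in H_0,\ b\in{\rm GF}(q)\}$, a nonabelian subgroup of the affine group of ${\rm GF}(q)$ isomorphic to $({\rm GF}(q),+)\rtimes C_{(q-1)/6}$. Then $G$ contains a regular \[\left(\frac{q(q-1)}{6},\ \frac{3(q-3)}{2},\ \frac{q+3}{2},\ 9\right)\text{-PDS}.\]
   Context: A $(v,k,\lambda,\mu)$-PDS in a group $G$ of order $v$ is a $k$-subset $D$ such that every nonidentity element of $D$ is $xy^{-1}$ ($x,y\in D$) in exactly $\lambda$ ways and every nonidentity element of $G\setminus D$ in exactly $\mu$ ways; regular means $D=D^{(-1)}$ and $1\notin D$. *)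

theory Defs
  imports "HOL-Algebra.Group" "HOL-Computational_Algebra.Primes"
begin

definition diff_count :: "('g, 'b) monoid_scheme \<Rightarrow> 'g set \<Rightarrow> 'g \<Rightarrow> nat" where
  "diff_count G D g = card {(x, y). x \<in> D \<and> y \<in> D \<and> x \<otimes>\<^bsub>G\<^esub> inv\<^bsub>G\<^esub> y = g}"

definition is_PDS :: "('g, 'b) monoid_scheme \<Rightarrow> 'g set \<Rightarrow> nat \<Rightarrow> nat \<Rightarrow> nat \<Rightarrow> nat \<Rightarrow> bool" where
  "is_PDS G D v k lam mu \<longleftrightarrow>
     finite (carrier G) \<and> card (carrier G) = v \<and> D \<subseteq> carrier G \<and> card D = k \<and>
     (\<forall>g \<in> carrier G. g \<noteq> \<one>\<^bsub>G\<^esub> \<longrightarrow>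
        diff_count G D g = (if g \<in> D then lam else mu))"

definition is_regular_PDS :: "('g, 'b) monoid_scheme \<Rightarrow> 'g set \<Rightarrow> nat \<Rightarrow> nat \<Rightarrow> nat \<Rightarrow> nat \<Rightarrow> bool" where
  "is_regular_PDS G D v k lam mu \<longleftrightarrow>
     is_PDS G D v k lam mu \<and> (\<lambda>x. inv\<^bsub>G\<^esub> x) ` D = D \<and> \<one>\<^bsub>G\<^esub> \<notin> D"

text \<open>The group of affine maps x \<mapsto> a x + b with a \<in> H0, b \<in> F, encoded as pairs (a,b);
  composition (a,b) \<circ> (c,e) = (x \<mapsto> a(cx+e)+b) = (ac, ae+b).\<close>

definition affine_group :: "'a::field set \<Rightarrow> ('a \<times> 'a) monoid" where
  "affine_group H0 = \<lparr> carrier = H0 \<times> UNIV,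
     monoid.mult = (\<lambda>(a, b) (c, e). (a * c, a * e + b)),
     one = (1, 0) \<rparr>"

end

(*
  Write q = 6m + 1 with m = |H0| odd. Then K = H0 \<union> -H0 is the subgroup of index 3 of
  GF(q)^*, and counting cyclotomic classes of order 3 gives t with t \<in> \<alpha>K and
  t - 1 \<in> \<alpha>^2 K, where \<alpha> \<notin> K. The six differences of B = {0, 1, t} then lie in the
  six cosets of H0, so the images of B under G form a Steiner triple system with
  replication number 3m on which G acts regularly. The block intersection graph of a
  Steiner triple system with replication number r is strongly regular with valency
  3(r - 1), \<lambda> = r + 2 and \<mu> = 9; identifying each block with the group element mapping
  B onto it, the blocks meeting B form the required regular PDS.
*)
theory Submission
  imports Defs "HOL-Library.Disjoint_Sets"
begin

lemma even_card_fixpoint_free_involution: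
  assumes "finite S" and "\<And>x. x \<in> S \<Longrightarrow> f x \<in> S"
    and "\<And>x. x \<in> S \<Longrightarrow> f x \<noteq> x" and "\<And>x. x \<in> S \<Longrightarrow> f (f x) = x"
  shows "even (card S)"
proof -
  let ?orbits = "(\<lambda>x. {x, f x}) ` S"
  have "pairwise disjnt ?orbits"
  proof (rule pairwise_imageI)
    fix x y assume "x \<in> S" "y \<in> S" "{x, f x} \<noteq> {y, f y}"
    then have "x \<noteq> y" "x \<noteq> f y" "f x \<noteq> y" "f x \<noteq> f y"
      using assms(4) by (metis insert_commute)+
    then show "disjnt {x, f x} {y, f y}" by simp
  qed
  then have "card (\<Union> ?orbits) = (\<Sum>P\<in>?orbits. card P)"
    by (rule card_Union_disjoint) blast
  moreover have "\<Union> ?orbits = S" using assms(2) by blast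
  ultimately have "card S = (\<Sum>P\<in>?orbits. card P)" by simp
  also have "\<dots> = (\<Sum>P\<in>?orbits. 2)"
  proof (rule sum.cong)
    show "card P = 2" if "P \<in> ?orbits" for P
      using that assms(3) by (auto simp: card_2_iff)
  qed simp
  finally show ?thesis by simp
qed

lemma two_neq_zero_if_odd_card:
  assumes "odd (card (UNIV :: 'a::{field,finite} set))"
  shows "(2::'a) \<noteq> 0"
proof
  assume "(2::'a) = 0"
  then have "even (card (UNIV :: 'a set))"
    by (intro even_card_fixpoint_free_involution[where f = "\<lambda>x. x + 1"])
      (auto simp: add.assoc one_add_one)
  with assms show False by simp
qed

lemma card_off_diagonal:
  assumes "finite A"
  shows "card {(x, y) \<in> A \<times> A. x \<noteq> y} = card A * (card A - 1)"
proof -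
  have "{(x, y) \<in> A \<times> A. x \<noteq> y} = A \<times> A - (\<lambda>x. (x, x)) ` A" by auto
  moreover have "card ((\<lambda>x. (x, x)) ` A) = card A" by (simp add: card_image inj_on_def)
  ultimately show ?thesis
    using assms by (simp add: card_Diff_subset card_cartesian_product image_subset_iff diff_mult_distrib2)
qed

locale mult_subgroup =
  fixes S :: "'a::{field,finite} set"
  assumes zero_not_mem: "0 \<notin> S" and one_mem: "1 \<in> S"
    and mult_mem: "x \<in> S \<Longrightarrow> y \<in> S \<Longrightarrow> x * y \<in> S"
begin

lemma nonzero_mem: "x \<in> S \<Longrightarrow> x \<noteq> 0"
  using zero_not_mem by blast

lemma inverse_mem:
  assumes "x \<in> S"
  shows "inverse x \<in> S"
proof -
  have "(\<lambda>y. x * y) ` S = S"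
    using assms by (intro endo_inj_surj) (auto simp: mult_mem inj_on_def nonzero_mem)
  then obtain y where "y \<in> S" "x * y = 1"
    using one_mem by (metis imageE)
  then show ?thesis
    using assms by (metis inverse_unique)
qed

lemma divide_mem: "x \<in> S \<Longrightarrow> y \<in> S \<Longrightarrow> x / y \<in> S"
  by (simp add: divide_inverse mult_mem inverse_mem)

lemma card_pos: "0 < card S"
  using one_mem by (auto simp: card_gt_0_iff)

lemma same_coset:
  assumes "x / a \<in> S" and "x / b \<in> S"
  shows "b / a \<in> S"
proof -
  have "x \<noteq> 0" "a \<noteq> 0" "b \<noteq> 0"
    using assms nonzero_mem by force+
  then have "b / a = (x / a) / (x / b)" by (simp add: field_simps)
  with divide_mem[OF assms] show ?thesis by simp
qed

lemma card_coset:
  assumes "c \<noteq> 0"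
  shows "card {x. x / c \<in> S} = card S"
proof -
  have "x / c \<in> S \<longleftrightarrow> x \<in> (\<lambda>y. c * y) ` S" for x
  proof
    assume "x / c \<in> S"
    then show "x \<in> (\<lambda>y. c * y) ` S"
      using assms by (intro image_eqI[of _ _ "x / c"]) simp_all
  qed (use assms in auto)
  then have "{x. x / c \<in> S} = (\<lambda>y. c * y) ` S" by blast
  then show ?thesis
    using assms by (simp add: card_image inj_on_def)
qed

lemma disjoint_coset:
  assumes "c \<notin> S"
  shows "S \<inter> {x. x / c \<in> S} = {}"
proof safe
  fix x assume "x \<in> S" "x / c \<in> S"
  then have "c / 1 \<in> S" using same_coset[of x 1 c] by simp
  with assms show "x \<in> {}" by simp
qed

lemma card_le_half_if_not_mem:
  assumes "b \<noteq> 0" and "b \<notin> S"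
  shows "2 * card S \<le> card (UNIV - {0::'a})"
proof -
  let ?C = "{x. x / b \<in> S}"
  have "card S + card ?C = card (S \<union> ?C)"
    using disjoint_coset[OF assms(2)] by (simp add: card_Un_disjoint)
  also have "\<dots> \<le> card (UNIV - {0::'a})"
    using nonzero_mem by (intro card_mono) force+
  finally show ?thesis
    using card_coset[OF assms(1)] by simp
qed

lemma mult_subgroup_coset_union:
  assumes "c ^ 2 \<in> S" and "c \<noteq> 0"
  shows "mult_subgroup (S \<union> {x. x / c \<in> S})"
proof
  show "0 \<notin> S \<union> {x. x / c \<in> S}" "1 \<in> S \<union> {x. x / c \<in> S}"
    using zero_not_mem one_mem by auto
  show "x * y \<in> S \<union> {x. x / c \<in> S}" if xy: "x \<in> S \<union> {x. x / c \<in> S}" "y \<in> S \<union> {x. x / c \<in> S}"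
    for x y
  proof -
    consider "x \<in> S" "y \<in> S" | "x \<in> S" "y / c \<in> S" | "x / c \<in> S" "y \<in> S"
      | "x / c \<in> S" "y / c \<in> S"
      using xy by blast
    then show ?thesis
    proof cases
      case 1
      then show ?thesis by (simp add: mult_mem)
    next
      case 2
      then have "x * (y / c) \<in> S" by (rule mult_mem)
      then show ?thesis by simp
    next
      case 3
      then have "x / c * y \<in> S" by (rule mult_mem)
      then show ?thesis by simp
    next
      case 4
      then have "x / c * (y / c) * c ^ 2 \<in> S"
        using assms(1) by (intro mult_mem)
      moreover have "x / c * (y / c) * c ^ 2 = x * y"
        using assms(2) by (simp add: power2_eq_square)
      ultimately show ?thesis by simp
    qed
  qed
qed

lemma neg_one_not_mem:
  assumes "odd (card S)" and "odd (card (UNIV :: 'a set))"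
  shows "- 1 \<notin> S"
proof
  assume neg_one: "- 1 \<in> S"
  have "even (card S)"
  proof (rule even_card_fixpoint_free_involution[where f = uminus])
    show "- x \<in> S" if "x \<in> S" for x
      using mult_mem[OF neg_one that] by simp
    show "- x \<noteq> x" if "x \<in> S" for x
      using two_neq_zero_if_odd_card[OF assms(2)] nonzero_mem[OF that]
      by (metis add_eq_0_iff2 mult_2 mult_eq_0_iff)
  qed simp_all
  with assms(1) show False by simp
qed

lemma mem_sign_closure_iff: "x \<in> S \<union> uminus ` S \<longleftrightarrow> x \<in> S \<or> - x \<in> S"
  by (auto simp: image_iff) (metis minus_minus)

lemma mult_subgroup_sign_closure: "mult_subgroup (S \<union> uminus ` S)"
proof
  show "0 \<notin> S \<union> uminus ` S" "1 \<in> S \<union> uminus ` S"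
    using zero_not_mem one_mem by (auto simp: mem_sign_closure_iff)
  show "x * y \<in> S \<union> uminus ` S" if "x \<in> S \<union> uminus ` S" "y \<in> S \<union> uminus ` S" for x y
    using that mult_mem[of x y] mult_mem[of "- x" y] mult_mem[of x "- y"] mult_mem[of "- x" "- y"]
    unfolding mem_sign_closure_iff by auto
qed

lemma card_sign_closure:
  assumes "- 1 \<notin> S"
  shows "card (S \<union> uminus ` S) = 2 * card S"
proof -
  have "S \<inter> uminus ` S = {}"
  proof safe
    fix y assume "y \<in> S" "- y \<in> S"
    then have "- y / y \<in> S" using divide_mem by blast
    with assms nonzero_mem[OF \<open>y \<in> S\<close>] show "- y \<in> {}" by simp
  qed
  then show ?thesis
    by (simp add: card_Un_disjoint card_image)
qed

end

locale index_three_subgroup = mult_subgroup K for K :: "'a::{field,finite} set" +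
  fixes \<alpha> :: 'a
  assumes index_three: "3 * card K = card (UNIV - {0::'a})"
    and neg_one_mem: "- 1 \<in> K"
    and \<alpha>_nonzero: "\<alpha> \<noteq> 0" and \<alpha>_not_mem: "\<alpha> \<notin> K"
begin

lemma \<alpha>_square_not_mem: "\<alpha> ^ 2 \<notin> K"
proof
  assume "\<alpha> ^ 2 \<in> K"
  let ?C = "{x. x / \<alpha> \<in> K}"
  interpret KC: mult_subgroup "K \<union> ?C"
    using \<open>\<alpha> ^ 2 \<in> K\<close> \<alpha>_nonzero by (rule mult_subgroup_coset_union)
  have card_KC: "card (K \<union> ?C) = 2 * card K"
    using card_coset[OF \<alpha>_nonzero] disjoint_coset[OF \<alpha>_not_mem] by (simp add: card_Un_disjoint)
  then have "\<not> UNIV - {0} \<subseteq> K \<union> ?C"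
    using card_mono[of "K \<union> ?C" "UNIV - {0}"] index_three card_pos by auto
  then obtain b where "b \<noteq> 0" "b \<notin> K \<union> ?C" by blast
  then have "2 * card (K \<union> ?C) \<le> card (UNIV - {0::'a})"
    by (rule KC.card_le_half_if_not_mem)
  with card_KC index_three card_pos show False by simp
qed

lemma \<alpha>_power_not_mem:
  assumes "0 < n" and "n < 3"
  shows "\<alpha> ^ n \<notin> K"
proof -
  have "n = 1 \<or> n = 2" using assms by auto
  then show ?thesis using \<alpha>_not_mem \<alpha>_square_not_mem by auto
qed

lemma coset_unique:
  assumes "i < 3" "j < 3" and "x / \<alpha> ^ i \<in> K" "x / \<alpha> ^ j \<in> K"
  shows "i = j"
proof (rule ccontr)
  assume "i \<noteq> j"
  have quotient_mem: "\<alpha> ^ j / \<alpha> ^ i \<in> K"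
    using assms(3,4) by (rule same_coset)
  consider "i < j" | "j < i" using \<open>i \<noteq> j\<close> by linarith
  then show False
  proof cases
    case 1
    then have "\<alpha> ^ j / \<alpha> ^ i = \<alpha> ^ (j - i)"
      by (simp only: power_diff[OF \<alpha>_nonzero less_imp_le])
    then show False using quotient_mem \<alpha>_power_not_mem[of "j - i"] 1 assms(2) by simp
  next
    case 2
    then have "\<alpha> ^ j / \<alpha> ^ i = inverse (\<alpha> ^ i / \<alpha> ^ j)"
      by simp
    also have "\<dots> = inverse (\<alpha> ^ (i - j))"
      using 2 by (simp only: power_diff[OF \<alpha>_nonzero less_imp_le])
    finally have "\<alpha> ^ j / \<alpha> ^ i = inverse (\<alpha> ^ (i - j))" .
    then show False
      using inverse_mem[OF quotient_mem] \<alpha>_power_not_mem[of "i - j"] 2 assms(1) by simp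
  qed
qed

lemma coset_exists:
  assumes "x \<noteq> 0"
  shows "\<exists>i<3. x / \<alpha> ^ i \<in> K"
proof -
  let ?C = "\<lambda>i. {x. x / \<alpha> ^ i \<in> K}"
  have "card (\<Union>i<3. ?C i) = (\<Sum>i<3. card (?C i))"
    using coset_unique by (intro card_UN_disjoint) auto
  also have "\<dots> = card (UNIV - {0::'a})"
    using card_coset \<alpha>_nonzero index_three by simp
  moreover have "(\<Union>i<3. ?C i) \<subseteq> UNIV - {0}"
    using nonzero_mem by force
  ultimately have "(\<Union>i<3. ?C i) = UNIV - {0}"
    by (intro card_subset_eq) simp_all
  with assms show ?thesis by blast
qed

lemma \<alpha>_cube_mem: "\<alpha> ^ 3 \<in> K"
proof -
  obtain i where "i < 3" "\<alpha> ^ 3 / \<alpha> ^ i \<in> K"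
    using coset_exists[of "\<alpha> ^ 3"] \<alpha>_nonzero by auto
  moreover have "\<alpha> ^ 3 / \<alpha> ^ i = \<alpha> ^ (3 - i)"
    using \<open>i < 3\<close> by (simp only: power_diff[OF \<alpha>_nonzero less_imp_le])
  ultimately show ?thesis
    using \<alpha>_power_not_mem[of "3 - i"] by (cases "i = 0") auto
qed

lemma neg_mem: "x \<in> K \<Longrightarrow> - x \<in> K"
  using mult_mem[OF neg_one_mem] by fastforce

definition cyclotomic_class :: "nat \<Rightarrow> nat \<Rightarrow> 'a set" where
  "cyclotomic_class i j = {t. t / \<alpha> ^ i \<in> K \<and> (t - 1) / \<alpha> ^ j \<in> K}"

lemma card_coset_minus_one:
  assumes "i < 3"
  shows "card ({t. t / \<alpha> ^ i \<in> K} - {1}) = (\<Sum>j<3. card (cyclotomic_class i j))"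
proof -
  have "{t. t / \<alpha> ^ i \<in> K} - {1} = (\<Union>j<3. cyclotomic_class i j)"
  proof (intro equalityI subsetI)
    fix t assume "t \<in> {t. t / \<alpha> ^ i \<in> K} - {1}"
    then have "t / \<alpha> ^ i \<in> K" and "t - 1 \<noteq> 0" by auto
    then show "t \<in> (\<Union>j<3. cyclotomic_class i j)"
      using coset_exists unfolding cyclotomic_class_def by blast
  next
    fix t assume "t \<in> (\<Union>j<3. cyclotomic_class i j)"
    then obtain j where "t / \<alpha> ^ i \<in> K" "(t - 1) / \<alpha> ^ j \<in> K"
      unfolding cyclotomic_class_def by blast
    then show "t \<in> {t. t / \<alpha> ^ i \<in> K} - {1}"
      using zero_not_mem by auto
  qed
  moreover have "card (\<Union>j<3. cyclotomic_class i j) = (\<Sum>j<3. card (cyclotomic_class i j))"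
    using coset_unique unfolding cyclotomic_class_def by (intro card_UN_disjoint) auto
  ultimately show ?thesis by simp
qed

lemma card_cyclotomic_class_1_0_le: "card (cyclotomic_class 1 0) \<le> card (cyclotomic_class 0 1)"
proof (rule card_inj_on_le)
  show "inj_on (\<lambda>t. 1 - t) (cyclotomic_class 1 0)" by (simp add: inj_on_def)
  show "(\<lambda>t. 1 - t) ` cyclotomic_class 1 0 \<subseteq> cyclotomic_class 0 1"
  proof clarify
    fix t assume "t \<in> cyclotomic_class 1 0"
    then have "t / \<alpha> \<in> K" "t - 1 \<in> K"
      unfolding cyclotomic_class_def by simp_all
    then show "1 - t \<in> cyclotomic_class 0 1"
      unfolding cyclotomic_class_def using neg_mem by fastforce
  qed
qed simp

lemma card_cyclotomic_class_1_1_le: "card (cyclotomic_class 1 1) \<le> card (cyclotomic_class 0 2)"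
proof (rule card_inj_on_le)
  have "t \<noteq> 0" if "t \<in> cyclotomic_class 1 1" for t
    using that nonzero_mem unfolding cyclotomic_class_def by force
  then show "inj_on (\<lambda>t. (t - 1) / t) (cyclotomic_class 1 1)"
    by (auto simp: inj_on_def field_simps)
  show "(\<lambda>t. (t - 1) / t) ` cyclotomic_class 1 1 \<subseteq> cyclotomic_class 0 2"
  proof clarify
    fix t assume "t \<in> cyclotomic_class 1 1"
    then have t_mem: "t / \<alpha> \<in> K" and t_minus_one_mem: "(t - 1) / \<alpha> \<in> K"
      unfolding cyclotomic_class_def by simp_all
    have "t \<noteq> 0" using t_mem nonzero_mem by force
    have "(t - 1) / \<alpha> / (t / \<alpha>) \<in> K"
      using t_minus_one_mem t_mem by (rule divide_mem)
    moreover have "(t - 1) / \<alpha> / (t / \<alpha>) = (t - 1) / t"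
      using \<alpha>_nonzero \<open>t \<noteq> 0\<close> by (simp add: field_simps)
    ultimately have "(t - 1) / t \<in> K" by metis
    moreover have "- 1 * inverse (t / \<alpha> * \<alpha> ^ 3) \<in> K"
      using neg_one_mem inverse_mem[OF mult_mem[OF t_mem \<alpha>_cube_mem]] by (rule mult_mem)
    moreover have "((t - 1) / t - 1) / \<alpha> ^ 2 = - 1 * inverse (t / \<alpha> * \<alpha> ^ 3)"
      using \<alpha>_nonzero \<open>t \<noteq> 0\<close> by (simp add: field_simps power2_eq_square power3_eq_cube)
    ultimately show "(t - 1) / t \<in> cyclotomic_class 0 2"
      unfolding cyclotomic_class_def by simp
  qed
qed simp

lemma cyclotomic_class_1_2_nonempty: "cyclotomic_class 1 2 \<noteq> {}"
proof -
  have sum_3: "(\<Sum>j<3. f j) = f 0 + f 1 + f 2" for f :: "nat \<Rightarrow> nat"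
    by (simp add: eval_nat_numeral)
  have row_0: "(\<Sum>j<3. card (cyclotomic_class 0 j)) = card K - 1"
    using card_coset_minus_one[of 0] one_mem by simp
  have "1 \<notin> {t. t / \<alpha> \<in> K}"
    using \<alpha>_not_mem inverse_mem by fastforce
  then have row_1: "(\<Sum>j<3. card (cyclotomic_class 1 j)) = card K"
    using card_coset_minus_one[of 1] card_coset[OF \<alpha>_nonzero] by simp
  have "0 < card (cyclotomic_class 1 2)"
    using row_0 row_1 card_pos card_cyclotomic_class_1_0_le card_cyclotomic_class_1_1_le
    unfolding sum_3 by linarith
  then show ?thesis by auto
qed

lemma base_block:
  obtains t where "t \<noteq> 0" and "t \<noteq> 1"
    and "\<And>d. d \<noteq> 0 \<Longrightarrow> \<exists>c\<in>K. \<exists>u\<in>{0, 1, t}. \<exists>v\<in>{0, 1, t}. d = c * (v - u)"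
proof -
  obtain t where t: "t / \<alpha> \<in> K" "(t - 1) / \<alpha> ^ 2 \<in> K"
    using cyclotomic_class_1_2_nonempty unfolding cyclotomic_class_def by auto
  have "t \<noteq> 0" "t - 1 \<noteq> 0"
    using t nonzero_mem by force+
  moreover have "\<exists>c\<in>K. \<exists>u\<in>{0, 1, t}. \<exists>v\<in>{0, 1, t}. d = c * (v - u)" if d_nonzero: "d \<noteq> 0" for d
  proof -
    obtain i where "i < 3" and d: "d / \<alpha> ^ i \<in> K"
      using coset_exists[OF d_nonzero] by blast
    then consider "i = 0" | "i = 1" | "i = 2" by linarith
    then show ?thesis
    proof cases
      case 1
      then have "d \<in> K" "d = d * (1 - 0)" using d by simp_all
      then show ?thesis by blast
    next
      case 2
      from d 2 have "d / \<alpha> \<in> K" by simp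
      then have "(d / \<alpha>) / (t / \<alpha>) \<in> K" using t(1) by (rule divide_mem)
      then have "d / t \<in> K" using \<alpha>_nonzero by (simp add: field_simps)
      moreover have "d = d / t * (t - 0)" using \<open>t \<noteq> 0\<close> by simp
      ultimately show ?thesis by blast
    next
      case 3
      from d 3 have "d / \<alpha> ^ 2 \<in> K" by simp
      then have "(d / \<alpha> ^ 2) / ((t - 1) / \<alpha> ^ 2) \<in> K" using t(2) by (rule divide_mem)
      then have "d / (t - 1) \<in> K" using \<alpha>_nonzero by (simp add: field_simps)
      moreover have "d = d / (t - 1) * (t - 1)" using \<open>t - 1 \<noteq> 0\<close> by simp
      ultimately show ?thesis by blast
    qed
  qed
  ultimately show ?thesis using that by simp
qed

end

locale steiner_system =
  fixes I :: "'i set" and blk :: "'i \<Rightarrow> 'p set" and k r :: nat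
  assumes finite_index: "finite I"
    and finite_block: "i \<in> I \<Longrightarrow> finite (blk i)"
    and card_block: "i \<in> I \<Longrightarrow> card (blk i) = k"
    and replication: "card {i \<in> I. x \<in> blk i} = r"
    and pair_covered: "x \<noteq> y \<Longrightarrow> \<exists>i\<in>I. x \<in> blk i \<and> y \<in> blk i"
    and pair_unique: "\<lbrakk>i \<in> I; j \<in> I; x \<noteq> y; x \<in> blk i; y \<in> blk i; x \<in> blk j; y \<in> blk j\<rbrakk> \<Longrightarrow> i = j"
begin

definition block_adj :: "'i \<Rightarrow> 'i \<Rightarrow> bool" where
  "block_adj i j \<longleftrightarrow> i \<noteq> j \<and> blk i \<inter> blk j \<noteq> {}"

definition blocks_through :: "'p \<Rightarrow> 'p \<Rightarrow> 'i set" where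
  "blocks_through x y = {l \<in> I. x \<in> blk l \<and> y \<in> blk l}"

lemma card_block_inter_le_one:
  assumes "i \<in> I" "j \<in> I" "i \<noteq> j"
  shows "card (blk i \<inter> blk j) \<le> 1"
proof -
  have "\<forall>x\<in>blk i \<inter> blk j. \<forall>y\<in>blk i \<inter> blk j. x = y"
    using pair_unique[OF assms(1,2)] assms(3) by blast
  then show ?thesis
    using finite_block[OF assms(1)] by (simp add: card_le_Suc0_iff_eq)
qed

lemma card_adjacent_blocks:
  assumes "i \<in> I"
  shows "card {j \<in> I. block_adj j i} = k * (r - 1)"
proof -
  have "{j \<in> I. block_adj j i} = (\<Union>x\<in>blk i. blocks_through x x - {i})"
    unfolding block_adj_def blocks_through_def by auto
  moreover have "card (\<Union>x\<in>blk i. blocks_through x x - {i}) = (\<Sum>x\<in>blk i. card (blocks_through x x - {i}))"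
  proof (rule card_UN_disjoint)
    show "finite (blk i)" using finite_block[OF assms] .
    show "\<forall>x\<in>blk i. finite (blocks_through x x - {i})"
      using finite_index unfolding blocks_through_def by simp
    show "\<forall>x\<in>blk i. \<forall>y\<in>blk i. x \<noteq> y \<longrightarrow>
        (blocks_through x x - {i}) \<inter> (blocks_through y y - {i}) = {}"
      using pair_unique assms unfolding blocks_through_def by blast
  qed
  moreover have "card (blocks_through x x - {i}) = r - 1" if "x \<in> blk i" for x
    using that assms replication finite_index unfolding blocks_through_def by simp
  ultimately show ?thesis
    using card_block[OF assms] by simp
qed

lemma card_blocks_through_minus:
  assumes "i \<in> I" "j \<in> I" "i \<noteq> j" and "x \<in> blk i" "y \<in> blk j"
  shows "card (blocks_through x y - {i, j}) =
    (if x = y then r - 2 else if x \<in> blk j \<or> y \<in> blk i then 0 else 1)"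
proof (cases "x = y")
  case True
  then show ?thesis
    using assms replication finite_index unfolding blocks_through_def
    by (subst card_Diff_subset) auto
next
  case False
  then obtain l where l: "l \<in> I" "x \<in> blk l" "y \<in> blk l"
    using pair_covered by blast
  then have "blocks_through x y = {l}"
    using pair_unique[OF _ l(1) False] unfolding blocks_through_def by blast
  moreover have "l = i \<longleftrightarrow> y \<in> blk i" "l = j \<longleftrightarrow> x \<in> blk j"
    using pair_unique[OF assms(1) l(1) False] pair_unique[OF assms(2) l(1) False] l assms(4,5)
    by blast+
  ultimately show ?thesis using False by auto
qed

lemma disjoint_family_blocks_through:
  assumes "i \<in> I" "j \<in> I"
  shows "disjoint_family_on (\<lambda>p. blocks_through (fst p) (snd p) - {i, j}) (blk i \<times> blk j)"
  unfolding disjoint_family_on_def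
proof (intro ballI impI equals0I)
  fix p q l
  assume "p \<in> blk i \<times> blk j" "q \<in> blk i \<times> blk j" "p \<noteq> q"
    and "l \<in> (blocks_through (fst p) (snd p) - {i, j}) \<inter> (blocks_through (fst q) (snd q) - {i, j})"
  then show False
    using assms pair_unique[of l i "fst p" "fst q"] pair_unique[of l j "snd p" "snd q"]
    unfolding blocks_through_def by (auto simp: prod_eq_iff)
qed

lemma card_common_adjacent_blocks_eq:
  assumes "i \<in> I" "j \<in> I" "i \<noteq> j"
  shows "card {l \<in> I. block_adj l i \<and> block_adj l j} =
    (r - 2) * card (blk i \<inter> blk j) + card (blk i - blk j) * card (blk j - blk i)"
proof -
  let ?B = "blk i" and ?C = "blk j"
  have common_eq: "{l \<in> I. block_adj l i \<and> block_adj l j} =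
      (\<Union>p\<in>?B \<times> ?C. blocks_through (fst p) (snd p) - {i, j})"
    unfolding block_adj_def blocks_through_def by auto
  have "card {l \<in> I. block_adj l i \<and> block_adj l j} =
      (\<Sum>p\<in>?B \<times> ?C. card (blocks_through (fst p) (snd p) - {i, j}))"
    unfolding common_eq
    by (intro card_UN_disjoint' disjoint_family_blocks_through assms)
      (use finite_index finite_block assms in \<open>simp_all add: blocks_through_def\<close>)
  also have "\<dots> = (\<Sum>p\<in>?B \<times> ?C. (if fst p = snd p then r - 2 else 0) +
      (if fst p \<notin> ?C \<and> snd p \<notin> ?B then 1 else 0))"
    using card_blocks_through_minus[OF assms] by (intro sum.cong) auto
  also have "\<dots> = (r - 2) * card {p \<in> ?B \<times> ?C. fst p = snd p} +
      card {p \<in> ?B \<times> ?C. fst p \<notin> ?C \<and> snd p \<notin> ?B}"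
    using finite_block assms(1,2) by (simp add: sum.distrib sum.inter_filter[symmetric])
  also have "{p \<in> ?B \<times> ?C. fst p = snd p} = (\<lambda>x. (x, x)) ` (?B \<inter> ?C)" by auto
  also have "{p \<in> ?B \<times> ?C. fst p \<notin> ?C \<and> snd p \<notin> ?B} = (?B - ?C) \<times> (?C - ?B)" by auto
  finally show ?thesis
    by (simp add: card_image inj_on_def card_cartesian_product)
qed

lemma card_common_adjacent_blocks:
  assumes "i \<in> I" "j \<in> I" "i \<noteq> j"
  shows "card {l \<in> I. block_adj l i \<and> block_adj l j} =
    (if blk i \<inter> blk j = {} then k * k else r - 2 + (k - 1) * (k - 1))"
proof (cases "blk i \<inter> blk j = {}")
  case True
  then have "blk i - blk j = blk i" "blk j - blk i = blk j" by auto
  then show ?thesis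
    using card_common_adjacent_blocks_eq[OF assms] True card_block assms(1,2) by simp
next
  case False
  then have "0 < card (blk i \<inter> blk j)"
    using finite_block assms(1) by (simp add: card_gt_0_iff)
  then have "card (blk i \<inter> blk j) = 1"
    using card_block_inter_le_one[OF assms] by linarith
  moreover have "card (blk i - blk j) = k - 1" "card (blk j - blk i) = k - 1"
    using card_Diff_subset_Int[of "blk i" "blk j"] card_Diff_subset_Int[of "blk j" "blk i"]
      finite_block card_block assms(1,2) \<open>card (blk i \<inter> blk j) = 1\<close>
    by (simp_all add: Int_commute)
  ultimately show ?thesis
    using card_common_adjacent_blocks_eq[OF assms] False by simp
qed

end

lemma (in group) diff_count_left_invariant:
  assumes adj_invariant: "\<And>g x y. \<lbrakk>g \<in> carrier G; x \<in> carrier G; y \<in> carrier G\<rbrakk> \<Longrightarrow>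
      adj (g \<otimes> x) (g \<otimes> y) \<longleftrightarrow> adj x y"
    and g: "g \<in> carrier G"
  shows "diff_count G {x \<in> carrier G. adj x \<one>} g = card {z \<in> carrier G. adj z \<one> \<and> adj z (inv g)}"
proof -
  let ?D = "{x \<in> carrier G. adj x \<one>}"
  have "x \<otimes> inv y = g \<longleftrightarrow> x = g \<otimes> y" if "x \<in> ?D" "y \<in> ?D" for x y
    using inv_solve_right' g that by blast
  moreover have "x \<otimes> inv y \<otimes> y = x" if "x \<in> ?D" "y \<in> ?D" for x y
    using that by (simp add: m_assoc)
  ultimately have "{(x, y). x \<in> ?D \<and> y \<in> ?D \<and> x \<otimes> inv y = g} = (\<lambda>y. (g \<otimes> y, y)) ` {y \<in> ?D. g \<otimes> y \<in> ?D}"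
    by (auto simp: image_iff)
  then have "diff_count G ?D g = card {y \<in> ?D. g \<otimes> y \<in> ?D}"
    unfolding diff_count_def by (simp add: card_image inj_on_def)
  also have "{y \<in> ?D. g \<otimes> y \<in> ?D} = {z \<in> carrier G. adj z \<one> \<and> adj z (inv g)}"
    using adj_invariant[of g _ "inv g"] g by auto
  finally show ?thesis .
qed

lemma (in group) regular_PDS_of_left_invariant_graph:
  assumes finite: "finite (carrier G)"
    and adj_sym: "\<And>x y. adj x y \<Longrightarrow> adj y x" and adj_irrefl: "\<not> adj \<one> \<one>"
    and adj_invariant: "\<And>g x y. \<lbrakk>g \<in> carrier G; x \<in> carrier G; y \<in> carrier G\<rbrakk> \<Longrightarrow>
      adj (g \<otimes> x) (g \<otimes> y) \<longleftrightarrow> adj x y"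
    and common_neighbours: "\<And>y. \<lbrakk>y \<in> carrier G; y \<noteq> \<one>\<rbrakk> \<Longrightarrow>
      card {z \<in> carrier G. adj z \<one> \<and> adj z y} = (if adj \<one> y then lam else mu)"
  shows "is_regular_PDS G {x \<in> carrier G. adj x \<one>} (card (carrier G)) (card {x \<in> carrier G. adj x \<one>}) lam mu"
proof -
  define D where "D = {x \<in> carrier G. adj x \<one>}"
  have adj_one_iff: "adj g \<one> \<longleftrightarrow> adj \<one> (inv g)" if "g \<in> carrier G" for g
    using adj_invariant[of "inv g" g \<one>] that by simp
  have inv_mem: "inv x \<in> D" if "x \<in> D" for x
    using that adj_one_iff adj_sym unfolding D_def by auto
  have inv_closed: "(\<lambda>x. inv x) ` D = D"
  proof
    show "(\<lambda>x. inv x) ` D \<subseteq> D" using inv_mem by auto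
    show "D \<subseteq> (\<lambda>x. inv x) ` D"
    proof
      fix x assume "x \<in> D"
      then have "x = inv (inv x)" "inv x \<in> D" using inv_mem unfolding D_def by auto
      then show "x \<in> (\<lambda>x. inv x) ` D" by blast
    qed
  qed
  have "diff_count G D g = (if g \<in> D then lam else mu)" if g: "g \<in> carrier G" "g \<noteq> \<one>" for g
    using diff_count_left_invariant[of adj, OF adj_invariant g(1)] common_neighbours[of "inv g"]
      adj_one_iff[OF g(1)] g unfolding D_def by simp
  then show ?thesis
    unfolding is_regular_PDS_def is_PDS_def D_def[symmetric]
    using finite inv_closed adj_irrefl by (auto simp: D_def)
qed

definition affine_map :: "'a::field \<times> 'a \<Rightarrow> 'a \<Rightarrow> 'a" where
  "affine_map g x = fst g * x + snd g"

lemma affine_map_mult: "affine_map (g \<otimes>\<^bsub>affine_group S\<^esub> h) = affine_map g \<circ> affine_map h"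
  by (cases g, cases h) (simp add: affine_group_def affine_map_def fun_eq_iff algebra_simps)

context mult_subgroup
begin

lemma carrier_affine_group: "carrier (affine_group S) = S \<times> UNIV"
  by (simp add: affine_group_def)

lemma one_affine_group: "\<one>\<^bsub>affine_group S\<^esub> = (1, 0)"
  by (simp add: affine_group_def)

lemma group_affine_group: "group (affine_group S)"
proof (rule groupI)
  fix x y assume "x \<in> carrier (affine_group S)" "y \<in> carrier (affine_group S)"
  then show "x \<otimes>\<^bsub>affine_group S\<^esub> y \<in> carrier (affine_group S)"
    by (cases x, cases y) (simp add: affine_group_def mult_mem)
next
  show "\<one>\<^bsub>affine_group S\<^esub> \<in> carrier (affine_group S)"
    by (simp add: affine_group_def one_mem)
next
  fix x y z
  show "x \<otimes>\<^bsub>affine_group S\<^esub> y \<otimes>\<^bsub>affine_group S\<^esub> z =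
      x \<otimes>\<^bsub>affine_group S\<^esub> (y \<otimes>\<^bsub>affine_group S\<^esub> z)"
    by (cases x, cases y, cases z) (simp add: affine_group_def algebra_simps)
next
  fix x
  show "\<one>\<^bsub>affine_group S\<^esub> \<otimes>\<^bsub>affine_group S\<^esub> x = x"
    by (cases x) (simp add: affine_group_def)
next
  fix x assume "x \<in> carrier (affine_group S)"
  then obtain a b where x: "x = (a, b)" "a \<in> S" by (auto simp: affine_group_def)
  then have "(inverse a, - (b / a)) \<in> carrier (affine_group S)"
    "(inverse a, - (b / a)) \<otimes>\<^bsub>affine_group S\<^esub> x = \<one>\<^bsub>affine_group S\<^esub>"
    using inverse_mem nonzero_mem by (simp_all add: affine_group_def field_simps)
  then show "\<exists>y\<in>carrier (affine_group S). y \<otimes>\<^bsub>affine_group S\<^esub> x = \<one>\<^bsub>affine_group S\<^esub>"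
    by blast
qed

lemma inj_affine_map: "g \<in> S \<times> UNIV \<Longrightarrow> inj (affine_map g)"
  using nonzero_mem by (auto simp: inj_def affine_map_def)

end

text \<open>The counting hypothesis makes the representation d = a (v - u) unique, so the
  images of B under the affine maps with multiplier in S form a Steiner system.\<close>

locale affine_difference_block = mult_subgroup S for S :: "'a::{field,finite} set" +
  fixes B :: "'a set"
  assumes differences_cover: "d \<noteq> 0 \<Longrightarrow> \<exists>a\<in>S. \<exists>u\<in>B. \<exists>v\<in>B. d = a * (v - u)"
    and card_differences: "card S * (card B * (card B - 1)) = card (UNIV - {0::'a})"
begin

lemma pair_in_affine_image:
  assumes "x \<noteq> y"
  obtains g u v where "g \<in> S \<times> UNIV" "u \<in> B" "v \<in> B" "affine_map g u = x" "affine_map g v = y"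
proof -
  obtain a u v where "a \<in> S" "u \<in> B" "v \<in> B" "y - x = a * (v - u)"
    using differences_cover[of "y - x"] assms by auto
  then show ?thesis
    using that[of "(a, x - a * u)" u v] by (auto simp: affine_map_def algebra_simps)
qed

lemma inj_on_affine_point_pairs:
  "inj_on (\<lambda>(g, u, v). (affine_map g u, affine_map g v)) ((S \<times> UNIV) \<times> {(u, v) \<in> B \<times> B. u \<noteq> v})"
proof -
  let ?f = "\<lambda>(g, u, v). (affine_map g u, affine_map g v)"
  let ?A = "(S \<times> (UNIV :: 'a set)) \<times> {(u, v) \<in> B \<times> B. u \<noteq> v}"
  let ?Y = "{(x, y) \<in> UNIV \<times> UNIV. (x::'a) \<noteq> y}"
  have "?f ` ?A = ?Y"
  proof
    show "?f ` ?A \<subseteq> ?Y"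
      using inj_affine_map by (auto dest: injD)
    show "?Y \<subseteq> ?f ` ?A"
    proof clarify
      fix x y :: 'a assume "x \<noteq> y"
      then obtain g u v where "g \<in> S \<times> UNIV" "u \<in> B" "v \<in> B" "affine_map g u = x" "affine_map g v = y"
        by (rule pair_in_affine_image)
      then show "(x, y) \<in> ?f ` ?A"
        using \<open>x \<noteq> y\<close> by (intro image_eqI[of _ _ "(g, u, v)"]) auto
    qed
  qed
  moreover have "card ?A = card ?Y"
  proof -
    have "card ?A = card (UNIV :: 'a set) * (card S * (card B * (card B - 1)))"
      using card_off_diagonal[of B] by (simp add: card_cartesian_product ac_simps)
    also have "\<dots> = card (UNIV :: 'a set) * (card (UNIV :: 'a set) - 1)"
      using card_differences by (simp add: card_Diff_singleton)
    also have "\<dots> = card ?Y"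
      using card_off_diagonal[of "UNIV :: 'a set"] by simp
    finally show ?thesis .
  qed
  ultimately show ?thesis by (simp add: inj_on_iff_eq_card)
qed


lemma card_affine_blocks_through:
  "card {g \<in> S \<times> UNIV. x \<in> affine_map g ` B} = card S * card B"
proof -
  let ?h = "\<lambda>(a, u). (a, x - a * u)"
  have "{g \<in> S \<times> UNIV. x \<in> affine_map g ` B} = ?h ` (S \<times> B)"
    by (force simp: affine_map_def image_iff)
  moreover have "inj_on ?h (S \<times> B)"
    using nonzero_mem by (auto simp: inj_on_def)
  ultimately show ?thesis
    by (simp add: card_image card_cartesian_product)
qed

sublocale steiner_system "S \<times> UNIV" "\<lambda>g. affine_map g ` B" "card B" "card S * card B"
proof
  show "card (affine_map g ` B) = card B" if "g \<in> S \<times> UNIV" for g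
    using inj_affine_map[OF that] by (simp add: card_image inj_on_subset)
  show "card {g \<in> S \<times> UNIV. x \<in> affine_map g ` B} = card S * card B" for x
    by (rule card_affine_blocks_through)
  show "\<exists>g\<in>S \<times> UNIV. x \<in> affine_map g ` B \<and> y \<in> affine_map g ` B" if "x \<noteq> y" for x y
    using pair_in_affine_image[OF that] by blast
  show "g = h"
    if gh: "g \<in> S \<times> UNIV" "h \<in> S \<times> UNIV" and "x \<noteq> y"
      and xy: "x \<in> affine_map g ` B" "y \<in> affine_map g ` B" "x \<in> affine_map h ` B" "y \<in> affine_map h ` B"
    for g h x y
  proof -
    obtain u v where uv: "u \<in> B" "v \<in> B" "affine_map g u = x" "affine_map g v = y"
      using xy(1,2) by blast
    obtain u' v' where uv': "u' \<in> B" "v' \<in> B" "affine_map h u' = x" "affine_map h v' = y"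
      using xy(3,4) by blast
    have "u \<noteq> v" "u' \<noteq> v'"
      using uv uv' \<open>x \<noteq> y\<close> by auto
    then have "(g, u, v) = (h, u', v')"
      using inj_onD[OF inj_on_affine_point_pairs, of "(g, u, v)" "(h, u', v')"] gh uv uv' by simp
    then show ?thesis by simp
  qed
qed simp_all

lemma block_adj_mult:
  assumes "g \<in> S \<times> UNIV" "x \<in> S \<times> UNIV" "y \<in> S \<times> UNIV"
  shows "block_adj (g \<otimes>\<^bsub>affine_group S\<^esub> x) (g \<otimes>\<^bsub>affine_group S\<^esub> y) \<longleftrightarrow> block_adj x y"
proof -
  interpret group "affine_group S" by (rule group_affine_group)
  have "g \<otimes>\<^bsub>affine_group S\<^esub> x = g \<otimes>\<^bsub>affine_group S\<^esub> y \<longleftrightarrow> x = y"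
    using assms by (simp add: carrier_affine_group)
  moreover have "affine_map g ` affine_map x ` B \<inter> affine_map g ` affine_map y ` B =
      affine_map g ` (affine_map x ` B \<inter> affine_map y ` B)"
    using inj_affine_map[OF assms(1)] by (simp add: image_Int)
  ultimately show ?thesis
    unfolding block_adj_def affine_map_mult image_comp[symmetric] by simp
qed

lemma regular_PDS_block_graph:
  "is_regular_PDS (affine_group S) {g \<in> S \<times> UNIV. block_adj g (1, 0)} (card S * card (UNIV :: 'a set))
     (card B * (card S * card B - 1)) (card S * card B - 2 + (card B - 1) * (card B - 1)) (card B * card B)"
proof -
  interpret group "affine_group S" by (rule group_affine_group)
  have "is_regular_PDS (affine_group S) {g \<in> carrier (affine_group S). block_adj g \<one>\<^bsub>affine_group S\<^esub>}
      (card (carrier (affine_group S))) (card {g \<in> carrier (affine_group S). block_adj g \<one>\<^bsub>affine_group S\<^esub>})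
      (card S * card B - 2 + (card B - 1) * (card B - 1)) (card B * card B)"
  proof (rule regular_PDS_of_left_invariant_graph)
    show "card {z \<in> carrier (affine_group S). block_adj z \<one>\<^bsub>affine_group S\<^esub> \<and> block_adj z y} =
        (if block_adj \<one>\<^bsub>affine_group S\<^esub> y then card S * card B - 2 + (card B - 1) * (card B - 1)
         else card B * card B)"
      if "y \<in> carrier (affine_group S)" "y \<noteq> \<one>\<^bsub>affine_group S\<^esub>" for y
      using that card_common_adjacent_blocks[of "(1, 0)" y] one_mem
      by (auto simp: carrier_affine_group one_affine_group block_adj_def)
    show "block_adj (g \<otimes>\<^bsub>affine_group S\<^esub> x) (g \<otimes>\<^bsub>affine_group S\<^esub> y) \<longleftrightarrow> block_adj x y"
      if "g \<in> carrier (affine_group S)" "x \<in> carrier (affine_group S)" "y \<in> carrier (affine_group S)"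
      for g x y
      using block_adj_mult that by (simp add: carrier_affine_group)
  qed (auto simp: carrier_affine_group block_adj_def)
  then show ?thesis
    using card_adjacent_blocks[of "(1, 0)"] one_mem
    by (simp add: carrier_affine_group one_affine_group card_cartesian_product)
qed

end

lemma (in mult_subgroup) index_six_base_block:
  assumes card_field: "card (UNIV :: 'a set) = 6 * card S + 1" and odd_card: "odd (card S)"
  obtains t where "t \<noteq> 0" and "t \<noteq> 1"
    and "\<And>d. d \<noteq> 0 \<Longrightarrow> \<exists>a\<in>S. \<exists>u\<in>{0, 1, t}. \<exists>v\<in>{0, 1, t}. d = a * (v - u)"
proof -
  let ?K = "S \<union> uminus ` S"
  have "- 1 \<notin> S"
    using neg_one_not_mem odd_card card_field by simp
  interpret K: mult_subgroup ?K
    by (rule mult_subgroup_sign_closure)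
  have card_nonzero: "card (UNIV - {0::'a}) = 3 * card ?K"
    using card_field card_sign_closure[OF \<open>- 1 \<notin> S\<close>] by (simp add: card_Diff_singleton)
  have "\<not> UNIV - {0} \<subseteq> ?K"
    using card_mono[of ?K "UNIV - {0}"] card_nonzero K.card_pos by auto
  then obtain \<alpha> where "\<alpha> \<noteq> 0" "\<alpha> \<notin> ?K" by blast
  interpret index_three_subgroup ?K \<alpha>
    using card_nonzero one_mem \<open>\<alpha> \<noteq> 0\<close> \<open>\<alpha> \<notin> ?K\<close> by unfold_locales force+
  obtain t where "t \<noteq> 0" "t \<noteq> 1"
    and cover: "\<And>d. d \<noteq> 0 \<Longrightarrow> \<exists>c\<in>?K. \<exists>u\<in>{0, 1, t}. \<exists>v\<in>{0, 1, t}. d = c * (v - u)"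
    using base_block by blast
  moreover have "\<exists>a\<in>S. \<exists>u\<in>{0, 1, t}. \<exists>v\<in>{0, 1, t}. d = a * (v - u)" if d_nonzero: "d \<noteq> 0" for d
  proof -
    obtain c u v where c: "c \<in> ?K" and uv: "u \<in> {0, 1, t}" "v \<in> {0, 1, t}"
      and d: "d = c * (v - u)"
      using cover[OF d_nonzero] by blast
    show ?thesis
    proof (cases "c \<in> S")
      case True
      with uv d show ?thesis by blast
    next
      case False
      then have "- c \<in> S" using c unfolding mem_sign_closure_iff by blast
      moreover have "d = - c * (u - v)" using d by (simp add: algebra_simps)
      ultimately show ?thesis using uv by blast
    qed
  qed
  ultimately show ?thesis using that by blast
qed

theorem (in mult_subgroup) affine_group_regular_PDS:
  assumes card_field: "card (UNIV :: 'a set) = 6 * card S + 1" and odd_card: "odd (card S)"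
  shows "\<exists>D. is_regular_PDS (affine_group S) D (card S * (6 * card S + 1))
    (3 * (3 * card S - 1)) (3 * card S + 2) 9"
proof -
  obtain t where t: "t \<noteq> 0" "t \<noteq> 1"
    and cover: "\<And>d. d \<noteq> 0 \<Longrightarrow> \<exists>a\<in>S. \<exists>u\<in>{0, 1, t}. \<exists>v\<in>{0, 1, t}. d = a * (v - u)"
    using index_six_base_block[OF assms] by blast
  have card_B: "card {0, 1, t} = 3" using t by simp
  interpret affine_difference_block S "{0, 1, t}"
    using cover card_field by unfold_locales (simp_all add: card_B card_Diff_singleton)
  have "card S * card (UNIV :: 'a set) = card S * (6 * card S + 1)"
    "card {0, 1, t} * (card S * card {0, 1, t} - 1) = 3 * (3 * card S - 1)"
    "card S * card {0, 1, t} - 2 + (card {0, 1, t} - 1) * (card {0, 1, t} - 1) = 3 * card S + 2"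
    "card {0, 1, t} * card {0, 1, t} = 9"
    using card_field card_pos card_B by simp_all
  then show ?thesis
    using regular_PDS_block_graph by metis
qed

theorem mainTheorem20:
  fixes p d q :: nat and H0 :: "'a::{field, finite} set"
  assumes "prime p" and "d \<ge> 1" and "q = p ^ d"
    and "card (UNIV :: 'a set) = q"
    and "q > 9" and "q mod 12 = 7"
    and "H0 \<subseteq> UNIV - {0}" and "1 \<in> H0"
    and "\<forall>x \<in> H0. \<forall>y \<in> H0. x * y \<in> H0"
    and "card H0 = (q - 1) div 6"
  shows "\<exists>D. is_regular_PDS (affine_group H0) D
            (q * (q - 1) div 6) (3 * (q - 3) div 2) ((q + 3) div 2) 9"
proof -
  interpret mult_subgroup H0
    using assms(7-9) by unfold_locales auto
  define m where "m = card H0"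
  have q: "q = 6 * m + 1" and odd_m: "odd m"
    using assms(6,10) unfolding m_def by presburger+
  have "q * (q - 1) div 6 = m * (6 * m + 1)"
    using q by (simp add: algebra_simps)
  moreover have "3 * (q - 3) div 2 = 3 * (3 * m - 1)" "(q + 3) div 2 = 3 * m + 2"
    using q odd_m by presburger+
  ultimately show ?thesis
    using affine_group_regular_PDS assms(4) q odd_m unfolding m_def by metis
qed

end
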